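(* Let $\mathbb{F}$ be an algebraically closed field of characteristic $0$, $D$ an $\mathbb{F}$-vector space with $\dim D=3$, and $\Gamma\subseteq D^{\ast}$ an additive subgroup with $\Gamma\simeq\mathbb{Z}^3$ and $\bigcap_{\alpha\in\Gamma}\ker\alpha=\{0\}$. Let $M=\bigoplus_{\theta\in\Gamma}M_\theta$ be a $\Gamma$-graded $\mathcal{S}(\Gamma,D)$-module with $\dim M_\theta=1$, $M_\theta=\mathbb{F}w_\theta$. Let $\sigma,\rho\in\Gamma$ be $\mathbb{Z}$-linearly independent, let $\tilde\partial_1$ be a nonzero vector of the one-dimensional space $\ker\sigma\cap\ker\rho$, $\tilde\partial_2\in\ker\sigma\setminus\mathbb{F}\tilde\partial_1$ and $\tilde\partial_3\in\ker\rho\setminus\mathbb{F}\tilde\partial_1$. Suppose that for some $\nu\in\Gamma$, $x^{-\sigma}\tilde\partial_1.x^{\sigma}\tilde\partial_1.w_\nu\neq0$ and $x^{-\rho}\tilde\partial_1.x^{\rho}\tilde\partial_1.w_\nu\neq0$. Let $a_1,b_1$ be any nonzero scalars with $x^{-\sigma}\tilde\partial_1.x^{\sigma}\tilde\partial_1.w_\nu=a_1^2w_\nu$ and $x^{-\rho}\tilde\partial_1.x^{\rho}\tilde\partial_1.w_\nu=b_1^2w_\nu$. Then there exist nonzero $v_{\nu+i\sigma+k\rho}\in M_{\nu+i\sigma+k\rho}$ ($i,k\in\mathbb{Z}$) such that $x^{\pm\sigma}\tilde\partial_1.v_{\nu+i\sigma+k\rho}=a_1v_{\nu+(i\pm1)\sigma+k\rho}$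 and $x^{\pm\rho}\tilde\partial_1.v_{\nu+i\sigma+k\rho}=b_1v_{\nu+i\sigma+(k\pm1)\rho}$ for all $i,k\in\mathbb{Z}$. Moreover, for any such family, writing $x^{\sigma}\tilde\partial_2.v_\nu=a_2v_{\nu+\sigma}$, $x^{\rho}\tilde\partial_3.v_\nu=a_3v_{\nu+\rho}$ and $x^{\sigma+\rho}\tilde\partial_1.v_\nu=dv_{\nu+\sigma+\rho}$, one has for all $i,k\in\mathbb{Z}$: $x^{\sigma+\rho}\tilde\partial_1.v_{\nu+i\sigma+k\rho}=dv_{\nu+(i+1)\sigma+(k+1)\rho}$, $x^{\pm\sigma}\tilde\partial_2.v_{\nu+i\sigma+k\rho}=\big(a_2+k\rho(\tilde\partial_2)\tfrac{d}{b_1}\big)v_{\nu+(i\pm1)\sigma+k\rho}$, $x^{\pm\rho}\tilde\partial_3.v_{\nu+i\sigma+k\rho}=\big(a_3+i\sigma(\tilde\partial_3)\tfrac{d}{a_1}\big)v_{\nu+i\sigma+(k\pm1)\rho}$, and $a_1^2=b_1^2=d^2$.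
   Context: $\mathcal{S}(\Gamma,D)$ is the Lie algebra spanned by $x^\alpha\partial$ with $\alpha\in\Gamma\setminus\{0\}$, $\partial\in\ker\alpha$ (linear in $\partial$), with bracket $[x^\alpha\partial_1,x^\beta\partial_2]=x^{\alpha+\beta}(\beta(\partial_1)\partial_2-\alpha(\partial_2)\partial_1)$. A $\Gamma$-graded module satisfies $x^\alpha\partial.M_\theta\subseteq M_{\alpha+\theta}$. *)

theory Defs
  imports "HOL-Analysis.Analysis" "HOL-Computational_Algebra.Polynomial"
begin

text \<open>The space D is modelled as 'f^3; its dual D* is identified with 'f^3 via the
  pairing below, so alpha(d) = dpair alpha d.\<close>

definition dpair :: "'f::field ^ 3 \<Rightarrow> 'f ^ 3 \<Rightarrow> 'f" where
  "dpair \<alpha> d = (\<Sum>i\<in>UNIV. \<alpha> $ i * d $ i)"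

definition is_Z3_lattice :: "('f::field ^ 3) set \<Rightarrow> bool" where
  "is_Z3_lattice \<Gamma> \<longleftrightarrow>
     (\<exists>g1 g2 g3.
        \<Gamma> = {of_int i *s g1 + of_int j *s g2 + of_int k *s g3 | i j k. True} \<and>
        (\<forall>i j k :: int. of_int i *s g1 + of_int j *s g2 + of_int k *s g3 = 0
                        \<longrightarrow> i = 0 \<and> j = 0 \<and> k = 0))"

text \<open>The carrier is the type 'm with F-scalar
  multiplication smul; Mg theta is the homogeneous component M_theta; act alpha d m is
  the action of the element x^alpha d (alpha in Gamma - {0}, d in ker alpha) on m.
  A representation of S(Gamma,D) = (direct sum over alpha of x^alpha ker alpha) is the
  same as a family of maps, linear in d on ker alpha, with values in End(M), respecting the bracket.\<close>
definition graded_S_module ::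
  "('f::field ^ 3) set \<Rightarrow> ('f \<Rightarrow> 'm::ab_group_add \<Rightarrow> 'm) \<Rightarrow> ('f ^ 3 \<Rightarrow> 'm set)
     \<Rightarrow> ('f ^ 3 \<Rightarrow> 'f ^ 3 \<Rightarrow> 'm \<Rightarrow> 'm) \<Rightarrow> bool" where
  "graded_S_module \<Gamma> smul Mg act \<longleftrightarrow>
     vector_space smul \<and>
     (\<forall>\<theta>\<in>\<Gamma>. module.subspace smul (Mg \<theta>)) \<and>
     \<comment> \<open>M is the direct sum of the M_theta, theta in Gamma\<close>
     (\<forall>m. \<exists>!f. (\<forall>\<theta>. f \<theta> \<in> Mg \<theta>) \<and> (\<forall>\<theta>. \<theta> \<notin> \<Gamma> \<longrightarrow> f \<theta> = 0) \<and>
               finite {\<theta>. f \<theta> \<noteq> 0} \<and> m = sum f {\<theta>. f \<theta> \<noteq> 0}) \<and>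
     \<comment> \<open>each x^alpha d acts linearly on M\<close>
     (\<forall>\<alpha>\<in>\<Gamma> - {0}. \<forall>d. dpair \<alpha> d = 0 \<longrightarrow>
        (\<forall>m m'. act \<alpha> d (m + m') = act \<alpha> d m + act \<alpha> d m') \<and>
        (\<forall>c m. act \<alpha> d (smul c m) = smul c (act \<alpha> d m))) \<and>
     \<comment> \<open>the action is linear in d in ker alpha\<close>
     (\<forall>\<alpha>\<in>\<Gamma> - {0}. \<forall>d d' c m. dpair \<alpha> d = 0 \<longrightarrow> dpair \<alpha> d' = 0 \<longrightarrow>
        act \<alpha> (c *s d + d') m = smul c (act \<alpha> d m) + act \<alpha> d' m) \<and>
     \<comment> \<open>bracket relation; for alpha + beta = 0 the bracket is 0 in S(Gamma,D)\<close>
     (\<forall>\<alpha>\<in>\<Gamma> - {0}. \<forall>\<beta>\<in>\<Gamma> - {0}. \<forall>d1 d2 m. dpair \<alpha> d1 = 0 \<longrightarrow> dpair \<beta> d2 = 0 \<longrightarrow>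
        act \<alpha> d1 (act \<beta> d2 m) - act \<beta> d2 (act \<alpha> d1 m) =
          (if \<alpha> + \<beta> = 0 then 0
           else act (\<alpha> + \<beta>) (dpair \<beta> d1 *s d2 - dpair \<alpha> d2 *s d1) m)) \<and>
     \<comment> \<open>grading: x^alpha d . M_theta is contained in M_(alpha+theta)\<close>
     (\<forall>\<alpha>\<in>\<Gamma> - {0}. \<forall>d \<theta> m. dpair \<alpha> d = 0 \<longrightarrow> \<theta> \<in> \<Gamma> \<longrightarrow> m \<in> Mg \<theta> \<longrightarrow>
        act \<alpha> d m \<in> Mg (\<alpha> + \<theta>))"

end

theory Submission
  imports Defs
begin

text \<open>
  The operators x^(\<plusminus>\<sigma>) \<partial>1 and x^(\<plusminus>\<rho>) \<partial>1 pairwise commute, because \<partial>1 lies in the kernels of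
  both \<sigma> and \<rho>. Hence x^(-\<sigma>) \<partial>1 x^\<sigma> \<partial>1 and x^(-\<rho>) \<partial>1 x^\<rho> \<partial>1 act as a1^2 and b1^2 on everything
  reachable from w \<nu>, so the rescaled operators 1/a1 x^(\<plusminus>\<sigma>) \<partial>1 and 1/b1 x^(\<plusminus>\<rho>) \<partial>1 are
  mutually inverse there; iterating them from w \<nu> produces the family v.

  For a given family, every homogeneous component being one-dimensional, each further operator
  sends v at a lattice point to a multiple of v at the shifted point. Since x^\<sigma> \<partial>2 commutes with
  x^(\<plusminus>\<sigma>) \<partial>1 and [x^\<sigma> \<partial>2, x^\<rho> \<partial>1] = \<rho>(\<partial>2) x^(\<sigma>+\<rho>) \<partial>1, the coefficients propagate from the
  origin. Evaluating [x^\<sigma> \<partial>2, x^(\<rho>-\<sigma>) \<partial>1] and [x^\<rho> \<partial>3, x^(-\<sigma>) \<partial>1] at the origin forces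
  d^2 = b1^2, and the bracket of x^(-\<sigma>) \<partial>2 with [x^\<sigma> \<partial>2, x^\<rho> \<partial>3] = x^(\<sigma>+\<rho>) (\<rho>(\<partial>2) \<partial>3 - \<sigma>(\<partial>3) \<partial>2)
  determines x^(-\<sigma>) \<partial>2. Exchanging the roles of \<sigma> and \<rho> gives the rest. All this needs
  \<rho>(\<partial>2) \<noteq> 0 \<noteq> \<sigma>(\<partial>3), which holds because ker \<sigma> \<inter> ker \<rho> is a line: \<Gamma> spans the dual space.
\<close>

lemma dpair_add_left: "dpair (\<alpha> + \<beta>) d = dpair \<alpha> d + dpair \<beta> d"
  unfolding dpair_def by (simp add: distrib_right sum.distrib)

lemma dpair_minus_left: "dpair (- \<alpha>) d = - dpair \<alpha> d"
  unfolding dpair_def by (simp add: sum_negf)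

lemma dpair_diff_left: "dpair (\<alpha> - \<beta>) d = dpair \<alpha> d - dpair \<beta> d"
  unfolding dpair_def by (simp add: algebra_simps sum_subtractf)

lemma dpair_scale_left: "dpair (c *s \<alpha>) d = c * dpair \<alpha> d"
  unfolding dpair_def by (simp add: sum_distrib_left mult.assoc)

lemma dpair_add_right: "dpair \<alpha> (d + e) = dpair \<alpha> d + dpair \<alpha> e"
  unfolding dpair_def by (simp add: distrib_left sum.distrib)

lemma dpair_diff_right: "dpair \<alpha> (d - e) = dpair \<alpha> d - dpair \<alpha> e"
  unfolding dpair_def by (simp add: algebra_simps sum_subtractf)

lemma dpair_scale_right: "dpair \<alpha> (c *s d) = c * dpair \<alpha> d"
  unfolding dpair_def by (simp add: sum_distrib_left algebra_simps)

lemma dpair_zero_right: "dpair \<alpha> 0 = 0"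
  unfolding dpair_def by simp

lemmas dpair_simps = dpair_add_left dpair_minus_left dpair_diff_left dpair_scale_left
  dpair_add_right dpair_diff_right dpair_scale_right dpair_zero_right

lemma int_pair_induct [case_names origin incr_fst decr_fst incr_snd decr_snd]:
  fixes P :: "int \<Rightarrow> int \<Rightarrow> bool"
  assumes "P 0 0" "\<And>i k. P i k \<Longrightarrow> P (i + 1) k" "\<And>i k. P i k \<Longrightarrow> P (i - 1) k"
    "\<And>i k. P i k \<Longrightarrow> P i (k + 1)" "\<And>i k. P i k \<Longrightarrow> P i (k - 1)"
  shows "P i k"
proof -
  have "P 0 k" by (induct k rule: int_induct[where k = 0]) (use assms in auto)
  then show ?thesis by (induct i rule: int_induct[where k = 0]) (use assms in auto)
qed

subsection \<open>Lattices in the dual space\<close>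

lemma Z3_lattice_add:
  assumes "is_Z3_lattice \<Gamma>" "x \<in> \<Gamma>" "y \<in> \<Gamma>"
  shows "x + y \<in> \<Gamma>"
proof -
  obtain g1 g2 g3 where G: "\<Gamma> = {of_int i *s g1 + of_int j *s g2 + of_int k *s g3 | i j k. True}"
    using assms(1) unfolding is_Z3_lattice_def by blast
  obtain i j k i' j' k' :: int where
    "x = of_int i *s g1 + of_int j *s g2 + of_int k *s g3"
    "y = of_int i' *s g1 + of_int j' *s g2 + of_int k' *s g3"
    using assms(2,3) G by blast
  then have "x + y = of_int (i + i') *s g1 + of_int (j + j') *s g2 + of_int (k + k') *s g3"
    by (simp add: vec_eq_iff algebra_simps)
  then show ?thesis using G by blast
qed

lemma Z3_lattice_uminus:
  assumes "is_Z3_lattice \<Gamma>" "x \<in> \<Gamma>"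
  shows "- x \<in> \<Gamma>"
proof -
  obtain g1 g2 g3 where G: "\<Gamma> = {of_int i *s g1 + of_int j *s g2 + of_int k *s g3 | i j k. True}"
    using assms(1) unfolding is_Z3_lattice_def by blast
  obtain i j k :: int where "x = of_int i *s g1 + of_int j *s g2 + of_int k *s g3"
    using assms(2) G by blast
  then have "- x = of_int (- i) *s g1 + of_int (- j) *s g2 + of_int (- k) *s g3"
    by (simp add: vec_eq_iff algebra_simps)
  then show ?thesis using G by blast
qed

lemma int_independent_pair_minor:
  fixes m1 m2 m3 n1 n2 n3 :: int
  assumes indep: "\<And>a b. a * m1 + b * n1 = 0 \<Longrightarrow> a * m2 + b * n2 = 0 \<Longrightarrow> a * m3 + b * n3 = 0
      \<Longrightarrow> a = 0 \<and> b = 0"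
  shows "m1 * n2 - m2 * n1 \<noteq> 0 \<or> m2 * n3 - m3 * n2 \<noteq> 0 \<or> m3 * n1 - m1 * n3 \<noteq> 0"
proof (rule ccontr)
  assume "\<not> ?thesis"
  then have minors: "m1 * n2 = m2 * n1" "m2 * n3 = m3 * n2" "m3 * n1 = m1 * n3" by auto
  have "m1 \<noteq> 0 \<or> m2 \<noteq> 0 \<or> m3 \<noteq> 0" using indep[of 1 0] by auto
  then show False
  proof (elim disjE)
    assume "m1 \<noteq> 0"
    then show False using indep[of n1 "- m1"] minors by (auto simp: algebra_simps)
  next
    assume "m2 \<noteq> 0"
    then show False using indep[of n2 "- m2"] minors by (auto simp: algebra_simps)
  next
    assume "m3 \<noteq> 0"
    then show False using indep[of n3 "- m3"] minors by (auto simp: algebra_simps)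
  qed
qed

lemma exists_nonzero_comb_in_kernel:
  fixes d x g :: "'f::field ^ 3"
  assumes "d \<noteq> 0" "x \<notin> {c *s d | c. True}"
  shows "\<exists>a b. a *s d + b *s x \<noteq> 0 \<and> dpair g (a *s d + b *s x) = 0"
proof (cases "dpair g x = 0 \<and> dpair g d = 0")
  case True
  then show ?thesis using assms(1) by (intro exI[of _ 1] exI[of _ 0]) (simp add: dpair_simps)
next
  case False
  have "dpair g x *s d + (- dpair g d) *s x \<noteq> 0"
  proof
    assume comb: "dpair g x *s d + (- dpair g d) *s x = 0"
    show False
    proof (cases "dpair g d = 0")
      case True
      then show False using comb False assms(1) by (simp add: vec_eq_iff)
    next
      case nz: False
      have "x = (dpair g x / dpair g d) *s d"
        using comb nz by (simp add: vec_eq_iff field_simps eq_neg_iff_add_eq_0)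
      then show False using assms(2) by blast
    qed
  qed
  moreover have "dpair g (dpair g x *s d + (- dpair g d) *s x) = 0"
    by (simp add: dpair_simps)
  ultimately show ?thesis by blast
qed

lemma cramer_homogeneous:
  fixes m1 m2 n1 n2 x y :: "'a::field"
  assumes "m1 * x + m2 * y = 0" "n1 * x + n2 * y = 0" "m1 * n2 - m2 * n1 \<noteq> 0"
  shows "x = 0 \<and> y = 0"
proof -
  have "(m1 * n2 - m2 * n1) * x = n2 * (m1 * x + m2 * y) - m2 * (n1 * x + n2 * y)"
    "(m1 * n2 - m2 * n1) * y = m1 * (n1 * x + n2 * y) - n1 * (m1 * x + m2 * y)"
    by (simp_all add: algebra_simps)
  then show ?thesis using assms by simp
qed

lemma common_kernel_kills_pair:
  fixes g1 g2 g3 \<sigma> \<rho> d :: "'f::field_char_0 ^ 3"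
  assumes "\<sigma> = of_int m1 *s g1 + of_int m2 *s g2 + of_int m3 *s g3"
    and "\<rho> = of_int n1 *s g1 + of_int n2 *s g2 + of_int n3 *s g3"
    and minor: "m1 * n2 - m2 * n1 \<noteq> 0"
    and "dpair \<sigma> d = 0" "dpair \<rho> d = 0" "dpair g3 d = 0"
  shows "dpair g1 d = 0 \<and> dpair g2 d = 0"
proof -
  have "of_int m1 * dpair g1 d + of_int m2 * dpair g2 d = 0"
    "of_int n1 * dpair g1 d + of_int n2 * dpair g2 d = 0"
    using assms by (simp_all add: dpair_simps)
  moreover have "(of_int m1 * of_int n2 - of_int m2 * of_int n1 :: 'f) \<noteq> 0"
    using minor by (metis of_int_eq_0_iff of_int_diff of_int_mult)
  ultimately show ?thesis
    by (metis cramer_homogeneous)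
qed

lemma Z3_lattice_third_functional:
  fixes \<Gamma> :: "('f::field_char_0 ^ 3) set"
  assumes lattice: "is_Z3_lattice \<Gamma>" and "\<sigma> \<in> \<Gamma>" "\<rho> \<in> \<Gamma>"
    and indep: "\<forall>i k :: int. of_int i *s \<sigma> + of_int k *s \<rho> = 0 \<longrightarrow> i = 0 \<and> k = 0"
  obtains g where
    "\<And>d. dpair \<sigma> d = 0 \<Longrightarrow> dpair \<rho> d = 0 \<Longrightarrow> dpair g d = 0 \<Longrightarrow> \<forall>\<alpha>\<in>\<Gamma>. dpair \<alpha> d = 0"
proof -
  obtain g1 g2 g3 where G: "\<Gamma> = {of_int i *s g1 + of_int j *s g2 + of_int k *s g3 | i j k. True}"
    using lattice unfolding is_Z3_lattice_def by blast
  obtain m1 m2 m3 :: int where m: "\<sigma> = of_int m1 *s g1 + of_int m2 *s g2 + of_int m3 *s g3"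
    using \<open>\<sigma> \<in> \<Gamma>\<close> G by blast
  obtain n1 n2 n3 :: int where n: "\<rho> = of_int n1 *s g1 + of_int n2 *s g2 + of_int n3 *s g3"
    using \<open>\<rho> \<in> \<Gamma>\<close> G by blast
  have kills_\<Gamma>: "\<forall>\<alpha>\<in>\<Gamma>. dpair \<alpha> d = 0" if "dpair g1 d = 0 \<and> dpair g2 d = 0 \<and> dpair g3 d = 0" for d
    using that G by (auto simp: dpair_add_left dpair_scale_left)
  have "m1 * n2 - m2 * n1 \<noteq> 0 \<or> m2 * n3 - m3 * n2 \<noteq> 0 \<or> m3 * n1 - m1 * n3 \<noteq> 0"
  proof (rule int_independent_pair_minor)
    fix a b :: int
    assume "a * m1 + b * n1 = 0" "a * m2 + b * n2 = 0" "a * m3 + b * n3 = 0"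
    moreover have "of_int a *s \<sigma> + of_int b *s \<rho> =
        of_int (a * m1 + b * n1) *s g1 + of_int (a * m2 + b * n2) *s g2 + of_int (a * m3 + b * n3) *s g3"
      unfolding m n by (simp add: vec_eq_iff algebra_simps)
    ultimately have "of_int a *s \<sigma> + of_int b *s \<rho> = 0" by simp
    then show "a = 0 \<and> b = 0" using indep by auto
  qed
  then show thesis
  proof (elim disjE)
    assume "m1 * n2 - m2 * n1 \<noteq> 0"
    then show thesis using common_kernel_kills_pair[OF m n] kills_\<Gamma> by (intro that[of g3]) blast
  next
    assume minor: "m2 * n3 - m3 * n2 \<noteq> 0"
    have "\<sigma> = of_int m2 *s g2 + of_int m3 *s g3 + of_int m1 *s g1"
      "\<rho> = of_int n2 *s g2 + of_int n3 *s g3 + of_int n1 *s g1"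
      unfolding m n by (simp_all add: ac_simps)
    then show thesis using common_kernel_kills_pair[OF _ _ minor] kills_\<Gamma> by (intro that[of g1]) blast
  next
    assume minor: "m3 * n1 - m1 * n3 \<noteq> 0"
    have "\<sigma> = of_int m3 *s g3 + of_int m1 *s g1 + of_int m2 *s g2"
      "\<rho> = of_int n3 *s g3 + of_int n1 *s g1 + of_int n2 *s g2"
      unfolding m n by (simp_all add: ac_simps)
    then show thesis using common_kernel_kills_pair[OF _ _ minor] kills_\<Gamma> by (intro that[of g2]) blast
  qed
qed

lemma Z3_lattice_common_kernel_dim_one:
  fixes \<Gamma> :: "('f::field_char_0 ^ 3) set"
  assumes lattice: "is_Z3_lattice \<Gamma>"
    and ker_trivial: "\<forall>d. (\<forall>\<alpha>\<in>\<Gamma>. dpair \<alpha> d = 0) \<longrightarrow> d = 0"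
    and "\<sigma> \<in> \<Gamma>" "\<rho> \<in> \<Gamma>"
    and indep: "\<forall>i k :: int. of_int i *s \<sigma> + of_int k *s \<rho> = 0 \<longrightarrow> i = 0 \<and> k = 0"
    and d1: "d1 \<noteq> 0" "dpair \<sigma> d1 = 0" "dpair \<rho> d1 = 0"
    and x: "dpair \<sigma> x = 0" "dpair \<rho> x = 0"
  shows "x \<in> {c *s d1 | c. True}"
proof (rule ccontr)
  assume "x \<notin> {c *s d1 | c. True}"
  obtain g where g: "\<And>d. dpair \<sigma> d = 0 \<Longrightarrow> dpair \<rho> d = 0 \<Longrightarrow> dpair g d = 0 \<Longrightarrow> \<forall>\<alpha>\<in>\<Gamma>. dpair \<alpha> d = 0"
    using Z3_lattice_third_functional[OF lattice \<open>\<sigma> \<in> \<Gamma>\<close> \<open>\<rho> \<in> \<Gamma>\<close> indep] by blast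
  obtain a b where "a *s d1 + b *s x \<noteq> 0" "dpair g (a *s d1 + b *s x) = 0"
    using exists_nonzero_comb_in_kernel[OF d1(1) \<open>x \<notin> _\<close>] by blast
  moreover have "dpair \<sigma> (a *s d1 + b *s x) = 0" "dpair \<rho> (a *s d1 + b *s x) = 0"
    using d1 x by (simp_all add: dpair_simps)
  ultimately show False using g ker_trivial by blast
qed

subsection \<open>Iterating an operator and its inverse along the integers\<close>

definition iter_int :: "('a \<Rightarrow> 'a) \<Rightarrow> ('a \<Rightarrow> 'a) \<Rightarrow> int \<Rightarrow> 'a \<Rightarrow> 'a" where
  "iter_int S S' i x = (if 0 \<le> i then (S ^^ nat i) x else (S' ^^ nat (- i)) x)"

lemma iter_int_mem:
  assumes "\<And>j y. y \<in> N j \<Longrightarrow> S y \<in> N (j + 1)" "\<And>j y. y \<in> N j \<Longrightarrow> S' y \<in> N (j - 1)"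
    and "x \<in> N 0"
  shows "iter_int S S' i x \<in> N i"
proof -
  have "(S ^^ n) x \<in> N (int n)" for n
  proof (induct n)
    case (Suc n)
    then show ?case using assms(1)[of "(S ^^ n) x" "int n"] by (simp add: add.commute)
  qed (use assms in simp)
  moreover have "(S' ^^ n) x \<in> N (- int n)" for n
  proof (induct n)
    case (Suc n)
    have "- int (Suc n) = - int n - 1" by simp
    then show ?case using assms(2)[OF Suc] by (metis funpow.simps(2) o_apply)
  qed (use assms in simp)
  ultimately show ?thesis
    unfolding iter_int_def by (metis int_nat_eq minus_minus nat_0_le neg_0_le_iff_le nle_le)
qed

lemma iter_int_commute:
  assumes "\<And>y. R (S y) = S (R y)" "\<And>y. R (S' y) = S' (R y)"
  shows "R (iter_int S S' i x) = iter_int S S' i (R x)"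
proof -
  have "R ((S ^^ n) x) = (S ^^ n) (R x)" for n by (induct n) (use assms in auto)
  moreover have "R ((S' ^^ n) x) = (S' ^^ n) (R x)" for n by (induct n) (use assms in auto)
  ultimately show ?thesis by (simp add: iter_int_def)
qed

lemma iter_int_step:
  assumes closed: "\<And>y. y \<in> Q \<Longrightarrow> S y \<in> Q" "\<And>y. y \<in> Q \<Longrightarrow> S' y \<in> Q"
    and inverse: "\<And>y. y \<in> Q \<Longrightarrow> S' (S y) = y" "\<And>y. y \<in> Q \<Longrightarrow> S (S' y) = y"
    and "x \<in> Q"
  shows "S (iter_int S S' i x) = iter_int S S' (i + 1) x"
    and "S' (iter_int S S' i x) = iter_int S S' (i - 1) x"
proof -
  have Q: "iter_int S S' j x \<in> Q" for j
    using iter_int_mem[where N = "\<lambda>_. Q"] closed \<open>x \<in> Q\<close> by blast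
  have up: "iter_int S S' (j + 1) x = S (iter_int S S' j x)" if "0 \<le> j" for j
    using that by (simp add: iter_int_def nat_add_distrib)
  have down: "iter_int S S' (j - 1) x = S' (iter_int S S' j x)" if "j \<le> 0" for j
  proof -
    have "nat (- (j - 1)) = Suc (nat (- j))" using that by simp
    then show ?thesis using that by (auto simp: iter_int_def)
  qed
  show "S (iter_int S S' i x) = iter_int S S' (i + 1) x"
  proof (cases "0 \<le> i")
    case False
    then show ?thesis using down[of "i + 1"] inverse(2)[OF Q] by simp
  qed (simp add: up)
  show "S' (iter_int S S' i x) = iter_int S S' (i - 1) x"
  proof (cases "i \<le> 0")
    case False
    then show ?thesis using up[of "i - 1"] inverse(1)[OF Q] by simp
  qed (simp add: down)
qed

locale rank_one_graded_module =
  fixes \<Gamma> :: "('f::field ^ 3) set" and smul :: "'f \<Rightarrow> 'm::ab_group_add \<Rightarrow> 'm"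
    and Mg :: "'f ^ 3 \<Rightarrow> 'm set" and act :: "'f ^ 3 \<Rightarrow> 'f ^ 3 \<Rightarrow> 'm \<Rightarrow> 'm"
    and w :: "'f ^ 3 \<Rightarrow> 'm"
  assumes graded: "graded_S_module \<Gamma> smul Mg act"
    and basis: "\<forall>\<theta>\<in>\<Gamma>. w \<theta> \<noteq> 0 \<and> Mg \<theta> = {smul c (w \<theta>) | c. True}"
    and lattice_add: "x \<in> \<Gamma> \<Longrightarrow> y \<in> \<Gamma> \<Longrightarrow> x + y \<in> \<Gamma>"
    and lattice_uminus: "x \<in> \<Gamma> \<Longrightarrow> - x \<in> \<Gamma>"
begin

sublocale M: vector_space smul
  using graded unfolding graded_S_module_def by blast

lemma act_scale:
  "\<alpha> \<in> \<Gamma> \<Longrightarrow> \<alpha> \<noteq> 0 \<Longrightarrow> dpair \<alpha> d = 0 \<Longrightarrow> act \<alpha> d (smul c m) = smul c (act \<alpha> d m)"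
  using graded unfolding graded_S_module_def by blast

lemma act_linear_dir:
  "\<alpha> \<in> \<Gamma> \<Longrightarrow> \<alpha> \<noteq> 0 \<Longrightarrow> dpair \<alpha> d = 0 \<Longrightarrow> dpair \<alpha> d' = 0 \<Longrightarrow>
    act \<alpha> (c *s d + d') m = smul c (act \<alpha> d m) + act \<alpha> d' m"
  using graded unfolding graded_S_module_def by blast

lemma act_zero_dir: "\<alpha> \<in> \<Gamma> \<Longrightarrow> \<alpha> \<noteq> 0 \<Longrightarrow> act \<alpha> 0 m = 0"
  using act_linear_dir[of \<alpha> 0 0 1 m] by (simp add: dpair_zero_right)

lemma act_scale_dir:
  "\<alpha> \<in> \<Gamma> \<Longrightarrow> \<alpha> \<noteq> 0 \<Longrightarrow> dpair \<alpha> d = 0 \<Longrightarrow> act \<alpha> (c *s d) m = smul c (act \<alpha> d m)"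
  using act_linear_dir[of \<alpha> d 0 c m] by (simp add: dpair_zero_right act_zero_dir)

lemma act_bracket:
  assumes "\<alpha> \<in> \<Gamma>" "\<alpha> \<noteq> 0" "\<beta> \<in> \<Gamma>" "\<beta> \<noteq> 0" "dpair \<alpha> x = 0" "dpair \<beta> y = 0"
  shows "act \<alpha> x (act \<beta> y m) = act \<beta> y (act \<alpha> x m) +
    (if \<alpha> + \<beta> = 0 then 0 else act (\<alpha> + \<beta>) (dpair \<beta> x *s y - dpair \<alpha> y *s x) m)"
proof -
  have "act \<alpha> x (act \<beta> y m) - act \<beta> y (act \<alpha> x m) =
      (if \<alpha> + \<beta> = 0 then 0 else act (\<alpha> + \<beta>) (dpair \<beta> x *s y - dpair \<alpha> y *s x) m)"
    using graded assms unfolding graded_S_module_def by blast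
  then show ?thesis by (simp add: diff_eq_eq add.commute)
qed

lemma act_commute_common_kernel:
  assumes "\<alpha> \<in> \<Gamma>" "\<alpha> \<noteq> 0" "\<beta> \<in> \<Gamma>" "\<beta> \<noteq> 0" "dpair \<alpha> x = 0" "dpair \<beta> x = 0"
  shows "act \<alpha> x (act \<beta> x m) = act \<beta> x (act \<alpha> x m)"
proof (cases "\<alpha> + \<beta> = 0")
  case False
  then have "\<alpha> + \<beta> \<in> \<Gamma>" using assms lattice_add by blast
  then show ?thesis using act_bracket[OF assms, of m] False assms by (simp add: act_zero_dir)
qed (use act_bracket[OF assms] in simp)

lemma act_grade:
  "\<alpha> \<in> \<Gamma> \<Longrightarrow> \<alpha> \<noteq> 0 \<Longrightarrow> dpair \<alpha> d = 0 \<Longrightarrow> \<theta> \<in> \<Gamma> \<Longrightarrow> m \<in> Mg \<theta> \<Longrightarrow> act \<alpha> d m \<in> Mg (\<alpha> + \<theta>)"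
  using graded unfolding graded_S_module_def by blast

lemma Mg_scale: "\<theta> \<in> \<Gamma> \<Longrightarrow> m \<in> Mg \<theta> \<Longrightarrow> smul c m \<in> Mg \<theta>"
  using basis by auto

lemma Mg_one_dim: "\<theta> \<in> \<Gamma> \<Longrightarrow> x \<in> Mg \<theta> \<Longrightarrow> y \<in> Mg \<theta> \<Longrightarrow> y \<noteq> 0 \<Longrightarrow> \<exists>c. x = smul c y"
proof -
  assume "\<theta> \<in> \<Gamma>" "x \<in> Mg \<theta>" "y \<in> Mg \<theta>" "y \<noteq> 0"
  then obtain c1 c2 where "x = smul c1 (w \<theta>)" "y = smul c2 (w \<theta>)" "c2 \<noteq> 0"
    using basis by auto
  then have "x = smul (c1 / c2) y" by simp
  then show ?thesis by blast
qed

lemma lattice_int_scale: "x \<in> \<Gamma> \<Longrightarrow> of_int i *s x \<in> \<Gamma>"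
proof (induct i rule: int_induct[where k = 0])
  case base
  then show ?case using lattice_add[OF base lattice_uminus[OF base]] by simp
next
  case (step1 i)
  then show ?case using lattice_add[of "of_int i *s x" x] by (simp add: vec_eq_iff algebra_simps)
next
  case (step2 i)
  then show ?case using lattice_add[of "of_int i *s x" "- x"] lattice_uminus
    by (simp add: vec_eq_iff algebra_simps)
qed

lemma iter_int_grade:
  assumes "s \<in> \<Gamma>" "\<theta> \<in> \<Gamma>" "x \<in> Mg \<theta>"
    and S: "\<And>\<theta> y. \<theta> \<in> \<Gamma> \<Longrightarrow> y \<in> Mg \<theta> \<Longrightarrow> S y \<in> Mg (s + \<theta>)"
    and S': "\<And>\<theta> y. \<theta> \<in> \<Gamma> \<Longrightarrow> y \<in> Mg \<theta> \<Longrightarrow> S' y \<in> Mg (- s + \<theta>)"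
  shows "iter_int S S' i x \<in> Mg (\<theta> + of_int i *s s)"
proof (rule iter_int_mem[where N = "\<lambda>j. Mg (\<theta> + of_int j *s s)"])
  have \<Gamma>: "\<theta> + of_int j *s s \<in> \<Gamma>" for j
    using lattice_add[OF assms(2) lattice_int_scale[OF assms(1)]] .
  show "S y \<in> Mg (\<theta> + of_int (j + 1) *s s)" if "y \<in> Mg (\<theta> + of_int j *s s)" for j y
    using S[OF \<Gamma> that] by (simp add: vec_eq_iff algebra_simps)
  show "S' y \<in> Mg (\<theta> + of_int (j - 1) *s s)" if "y \<in> Mg (\<theta> + of_int j *s s)" for j y
    using S'[OF \<Gamma> that] by (simp add: vec_eq_iff algebra_simps)
qed (use assms in simp)

lemma commuting_shift:
  assumes comm: "T (U x) = U (T x)" and "T x = smul c y" "U x = smul a x'" "U y = smul a y'"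
    and "a \<noteq> 0"
    and T: "\<And>b z. T (smul b z) = smul b (T z)" and U: "\<And>b z. U (smul b z) = smul b (U z)"
  shows "T x' = smul c y'"
proof -
  have "smul a (T x') = T (U x)" by (simp only: \<open>U x = smul a x'\<close> T)
  also have "\<dots> = smul c (U y)" by (simp only: comm \<open>T x = smul c y\<close> U)
  also have "\<dots> = smul a (smul c y')" by (simp add: \<open>U y = smul a y'\<close> mult.commute)
  finally show ?thesis by (rule M.scale_left_imp_eq[OF \<open>a \<noteq> 0\<close>])
qed

end

locale two_directions = rank_one_graded_module \<Gamma> smul Mg act w
  for \<Gamma> :: "('f::field ^ 3) set" and smul :: "'f \<Rightarrow> 'm::ab_group_add \<Rightarrow> 'm" and Mg act w +
  fixes \<sigma> \<rho> d1 :: "'f ^ 3"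
  assumes \<sigma>_mem: "\<sigma> \<in> \<Gamma>" and \<rho>_mem: "\<rho> \<in> \<Gamma>"
    and independent: "\<forall>i k :: int. of_int i *s \<sigma> + of_int k *s \<rho> = 0 \<longrightarrow> i = 0 \<and> k = 0"
    and \<sigma>_d1: "dpair \<sigma> d1 = 0" and \<rho>_d1: "dpair \<rho> d1 = 0"
begin

lemma two_directions_swap: "two_directions \<Gamma> smul Mg act w \<rho> \<sigma> d1"
proof unfold_locales
  show "\<forall>i k :: int. of_int i *s \<rho> + of_int k *s \<sigma> = 0 \<longrightarrow> i = 0 \<and> k = 0"
    using independent by (metis add.commute)
qed (simp_all add: \<sigma>_mem \<rho>_mem \<sigma>_d1 \<rho>_d1)

lemma lattice_point_mem: "\<nu> \<in> \<Gamma> \<Longrightarrow> \<nu> + of_int i *s \<sigma> + of_int k *s \<rho> \<in> \<Gamma>"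
  using lattice_add lattice_int_scale \<sigma>_mem \<rho>_mem by blast

lemma direction_nonzero:
  "\<sigma> \<noteq> 0" "\<rho> \<noteq> 0" "- \<sigma> \<noteq> 0" "- \<rho> \<noteq> 0" "\<sigma> + \<rho> \<noteq> 0" "\<rho> - \<sigma> \<noteq> 0" "\<sigma> + \<sigma> \<noteq> 0"
proof -
  have nz: "of_int i *s \<sigma> + of_int k *s \<rho> \<noteq> 0" if "\<not> (i = 0 \<and> k = 0)" for i k :: int
    using independent that by blast
  show "\<sigma> \<noteq> 0" using nz[of 1 0] by simp
  show "\<rho> \<noteq> 0" using nz[of 0 1] by simp
  then show "- \<rho> \<noteq> 0" by simp
  show "- \<sigma> \<noteq> 0" using \<open>\<sigma> \<noteq> 0\<close> by simp
  show "\<sigma> + \<rho> \<noteq> 0" using nz[of 1 1] by simp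
  show "\<rho> - \<sigma> \<noteq> 0" using nz[of "- 1" 1] by (simp add: algebra_simps)
  have "\<sigma> + \<sigma> = of_int 2 *s \<sigma> + of_int 0 *s \<rho>" by (simp add: vec_eq_iff)
  then show "\<sigma> + \<sigma> \<noteq> 0" using nz[of 2 0] by simp
qed

lemma direction_mem:
  "\<sigma> \<in> \<Gamma>" "\<rho> \<in> \<Gamma>" "- \<sigma> \<in> \<Gamma>" "- \<rho> \<in> \<Gamma>" "\<sigma> + \<rho> \<in> \<Gamma>" "\<rho> - \<sigma> \<in> \<Gamma>" "\<sigma> + \<sigma> \<in> \<Gamma>"
  using \<sigma>_mem \<rho>_mem lattice_uminus lattice_add[of \<sigma> \<rho>] lattice_add[of \<sigma> \<sigma>]
    lattice_add[of \<rho> "- \<sigma>"] by simp_all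

lemma direction_d1:
  "dpair \<sigma> d1 = 0" "dpair \<rho> d1 = 0" "dpair (- \<sigma>) d1 = 0" "dpair (- \<rho>) d1 = 0"
  "dpair (\<sigma> + \<rho>) d1 = 0" "dpair (\<rho> - \<sigma>) d1 = 0"
  using \<sigma>_d1 \<rho>_d1 by (simp_all add: dpair_simps)

lemmas direction_facts = direction_nonzero direction_mem direction_d1

end

subsection \<open>Existence of the ladder\<close>

locale ladder_seed = two_directions \<Gamma> smul Mg act w \<sigma> \<rho> d1
  for \<Gamma> :: "('f::field ^ 3) set" and smul :: "'f \<Rightarrow> 'm::ab_group_add \<Rightarrow> 'm"
    and Mg act w \<sigma> \<rho> d1 +
  fixes \<nu> :: "'f ^ 3" and a1 b1 :: 'f
  assumes \<nu>_mem: "\<nu> \<in> \<Gamma>" and a1_nonzero: "a1 \<noteq> 0" and b1_nonzero: "b1 \<noteq> 0"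
    and \<sigma>_loop: "act (- \<sigma>) d1 (act \<sigma> d1 (w \<nu>)) = smul (a1 ^ 2) (w \<nu>)"
    and \<rho>_loop: "act (- \<rho>) d1 (act \<rho> d1 (w \<nu>)) = smul (b1 ^ 2) (w \<nu>)"
begin

definition up\<sigma> :: "'m \<Rightarrow> 'm" where "up\<sigma> x = smul (1 / a1) (act \<sigma> d1 x)"
definition down\<sigma> :: "'m \<Rightarrow> 'm" where "down\<sigma> x = smul (1 / a1) (act (- \<sigma>) d1 x)"
definition up\<rho> :: "'m \<Rightarrow> 'm" where "up\<rho> x = smul (1 / b1) (act \<rho> d1 x)"
definition down\<rho> :: "'m \<Rightarrow> 'm" where "down\<rho> x = smul (1 / b1) (act (- \<rho>) d1 x)"

definition ladder_ops :: "('m \<Rightarrow> 'm) set" where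
  "ladder_ops = {up\<sigma>, down\<sigma>, up\<rho>, down\<rho>}"

lemma ladder_op_cases:
  assumes "U \<in> ladder_ops"
  obtains \<alpha> c where "\<alpha> \<in> \<Gamma>" "\<alpha> \<noteq> 0" "dpair \<alpha> d1 = 0" "U = (\<lambda>x. smul c (act \<alpha> d1 x))"
proof -
  have "U = up\<sigma> \<or> U = down\<sigma> \<or> U = up\<rho> \<or> U = down\<rho>" using assms by (simp add: ladder_ops_def)
  then show thesis
  proof (elim disjE)
    assume "U = up\<sigma>"
    then show thesis using direction_facts by (intro that[of \<sigma> "1 / a1"]) (auto simp: up\<sigma>_def)
  next
    assume "U = down\<sigma>"
    then show thesis using direction_facts by (intro that[of "- \<sigma>" "1 / a1"]) (auto simp: down\<sigma>_def)
  next
    assume "U = up\<rho>"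
    then show thesis using direction_facts by (intro that[of \<rho> "1 / b1"]) (auto simp: up\<rho>_def)
  next
    assume "U = down\<rho>"
    then show thesis using direction_facts by (intro that[of "- \<rho>" "1 / b1"]) (auto simp: down\<rho>_def)
  qed
qed

lemma ladder_op_scale: "U \<in> ladder_ops \<Longrightarrow> U (smul c x) = smul c (U x)"
  by (erule ladder_op_cases) (simp add: act_scale mult.commute)

lemma ladder_op_zero: "U \<in> ladder_ops \<Longrightarrow> U 0 = 0"
  using ladder_op_scale[of U 0 0] by simp

lemma ladder_ops_commute: "U \<in> ladder_ops \<Longrightarrow> V \<in> ladder_ops \<Longrightarrow> U (V x) = V (U x)"
proof -
  assume "U \<in> ladder_ops" "V \<in> ladder_ops"
  then obtain \<alpha> c \<beta> e where \<alpha>: "\<alpha> \<in> \<Gamma>" "\<alpha> \<noteq> 0" "dpair \<alpha> d1 = 0"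
    and \<beta>: "\<beta> \<in> \<Gamma>" "\<beta> \<noteq> 0" "dpair \<beta> d1 = 0"
    and UV: "U = (\<lambda>x. smul c (act \<alpha> d1 x))" "V = (\<lambda>x. smul e (act \<beta> d1 x))"
    by (elim ladder_op_cases)
  show ?thesis
    using act_commute_common_kernel[OF \<alpha>(1,2) \<beta>(1,2) \<alpha>(3) \<beta>(3)] \<alpha> \<beta>
    by (simp add: UV act_scale mult.commute)
qed

definition ladder_domain :: "'m set" where
  "ladder_domain = {x. x \<noteq> 0 \<and> down\<sigma> (up\<sigma> x) = x \<and> up\<sigma> (down\<sigma> x) = x
                         \<and> down\<rho> (up\<rho> x) = x \<and> up\<rho> (down\<rho> x) = x}"

lemma w_in_ladder_domain: "w \<nu> \<in> ladder_domain"
proof -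
  have ops: "up\<sigma> \<in> ladder_ops" "down\<sigma> \<in> ladder_ops" "up\<rho> \<in> ladder_ops" "down\<rho> \<in> ladder_ops"
    by (simp_all add: ladder_ops_def)
  have "down\<sigma> (up\<sigma> (w \<nu>)) = w \<nu>" "down\<rho> (up\<rho> (w \<nu>)) = w \<nu>"
    using \<sigma>_loop \<rho>_loop a1_nonzero b1_nonzero direction_facts
    by (simp_all add: up\<sigma>_def down\<sigma>_def up\<rho>_def down\<rho>_def act_scale power2_eq_square)
  moreover have "w \<nu> \<noteq> 0" using basis \<nu>_mem by blast
  ultimately show ?thesis
    unfolding ladder_domain_def using ladder_ops_commute[OF ops(1,2)] ladder_ops_commute[OF ops(3,4)]
    by simp
qed

lemma ladder_domain_closed:
  assumes U: "U \<in> ladder_ops" and x: "x \<in> ladder_domain"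
  shows "U x \<in> ladder_domain"
proof -
  have ops: "up\<sigma> \<in> ladder_ops" "down\<sigma> \<in> ladder_ops" "up\<rho> \<in> ladder_ops" "down\<rho> \<in> ladder_ops"
    by (simp_all add: ladder_ops_def)
  have "\<exists>V\<in>ladder_ops. V (U x) = x"
    using U x unfolding ladder_ops_def ladder_domain_def by auto
  then have "U x \<noteq> 0"
    using x ladder_op_zero unfolding ladder_domain_def by force
  moreover have "V (W (U x)) = U x" if "V \<in> ladder_ops" "W \<in> ladder_ops" "V (W x) = x" for V W
    using ladder_ops_commute[OF U] that by metis
  ultimately show ?thesis
    using x ops unfolding ladder_domain_def by blast
qed

lemma ladder_domain_inverses:
  assumes "x \<in> ladder_domain"
  shows "down\<sigma> (up\<sigma> x) = x" "up\<sigma> (down\<sigma> x) = x" "down\<rho> (up\<rho> x) = x" "up\<rho> (down\<rho> x) = x"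
  using assms unfolding ladder_domain_def by simp_all

lemma ladder_op_grade:
  assumes "\<theta> \<in> \<Gamma>" "y \<in> Mg \<theta>"
  shows "up\<sigma> y \<in> Mg (\<sigma> + \<theta>)" "down\<sigma> y \<in> Mg (- \<sigma> + \<theta>)"
    and "up\<rho> y \<in> Mg (\<rho> + \<theta>)" "down\<rho> y \<in> Mg (- \<rho> + \<theta>)"
  using assms direction_facts Mg_scale[OF lattice_add act_grade]
  unfolding up\<sigma>_def down\<sigma>_def up\<rho>_def down\<rho>_def by blast+

lemma act_d1_via_ladder_ops:
  "act \<sigma> d1 x = smul a1 (up\<sigma> x)" "act (- \<sigma>) d1 x = smul a1 (down\<sigma> x)"
  "act \<rho> d1 x = smul b1 (up\<rho> x)" "act (- \<rho>) d1 x = smul b1 (down\<rho> x)"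
  using a1_nonzero b1_nonzero by (simp_all add: up\<sigma>_def down\<sigma>_def up\<rho>_def down\<rho>_def)

definition ladder :: "int \<Rightarrow> int \<Rightarrow> 'm" where
  "ladder i k = iter_int up\<sigma> down\<sigma> i (iter_int up\<rho> down\<rho> k (w \<nu>))"

lemma ladder_ops_closed:
  "x \<in> ladder_domain \<Longrightarrow> up\<sigma> x \<in> ladder_domain" "x \<in> ladder_domain \<Longrightarrow> down\<sigma> x \<in> ladder_domain"
  "x \<in> ladder_domain \<Longrightarrow> up\<rho> x \<in> ladder_domain" "x \<in> ladder_domain \<Longrightarrow> down\<rho> x \<in> ladder_domain"
  by (simp_all add: ladder_domain_closed ladder_ops_def)

lemma column_in_domain: "iter_int up\<rho> down\<rho> k (w \<nu>) \<in> ladder_domain"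
  by (rule iter_int_mem[where N = "\<lambda>_. ladder_domain"])
    (simp_all add: ladder_ops_closed w_in_ladder_domain)

lemma ladder_in_domain: "ladder i k \<in> ladder_domain"
  unfolding ladder_def
  by (rule iter_int_mem[where N = "\<lambda>_. ladder_domain"])
    (simp_all add: ladder_ops_closed column_in_domain)

lemma ladder_steps:
  "up\<sigma> (ladder i k) = ladder (i + 1) k" "down\<sigma> (ladder i k) = ladder (i - 1) k"
  "up\<rho> (ladder i k) = ladder i (k + 1)" "down\<rho> (ladder i k) = ladder i (k - 1)"
proof -
  note \<sigma>_step = iter_int_step[where Q = ladder_domain and S = up\<sigma> and S' = down\<sigma>]
  note \<rho>_step = iter_int_step[where Q = ladder_domain and S = up\<rho> and S' = down\<rho>]
  note inverse = ladder_domain_inverses ladder_ops_closed w_in_ladder_domain column_in_domain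
  show "up\<sigma> (ladder i k) = ladder (i + 1) k" "down\<sigma> (ladder i k) = ladder (i - 1) k"
    unfolding ladder_def by (rule \<sigma>_step; simp add: inverse)+
  have commute: "U (ladder i k) = iter_int up\<sigma> down\<sigma> i (U (iter_int up\<rho> down\<rho> k (w \<nu>)))"
    if "U \<in> ladder_ops" for U
    unfolding ladder_def
    by (rule iter_int_commute) (use that ladder_ops_commute in \<open>simp_all add: ladder_ops_def\<close>)
  show "up\<rho> (ladder i k) = ladder i (k + 1)" "down\<rho> (ladder i k) = ladder i (k - 1)"
    using commute[of up\<rho>] commute[of down\<rho>] unfolding ladder_def
    by (simp_all add: ladder_ops_def \<rho>_step[where x = "w \<nu>"] inverse)
qed

lemma ladder_grade: "ladder i k \<in> Mg (\<nu> + of_int i *s \<sigma> + of_int k *s \<rho>)"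
proof -
  have "w \<nu> \<in> Mg \<nu>" using basis \<nu>_mem by (metis (mono_tags, lifting) M.scale_one mem_Collect_eq)
  then have "iter_int up\<rho> down\<rho> k (w \<nu>) \<in> Mg (\<nu> + of_int k *s \<rho>)"
    by (rule iter_int_grade[OF \<rho>_mem \<nu>_mem]) (rule ladder_op_grade; assumption)+
  moreover have "\<nu> + of_int k *s \<rho> \<in> \<Gamma>" using lattice_point_mem[OF \<nu>_mem, of 0 k] by simp
  ultimately have "ladder i k \<in> Mg ((\<nu> + of_int k *s \<rho>) + of_int i *s \<sigma>)"
    unfolding ladder_def
    by (intro iter_int_grade[OF \<sigma>_mem]) (assumption | rule ladder_op_grade)+
  then show ?thesis by (simp add: ac_simps)
qed

theorem exists_ladder_family:
  "\<exists>v. (\<forall>i k. v i k \<in> Mg (\<nu> + of_int i *s \<sigma> + of_int k *s \<rho>) \<and> v i k \<noteq> 0) \<and>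
       (\<forall>i k. act \<sigma> d1 (v i k) = smul a1 (v (i + 1) k) \<and>
              act (- \<sigma>) d1 (v i k) = smul a1 (v (i - 1) k) \<and>
              act \<rho> d1 (v i k) = smul b1 (v i (k + 1)) \<and>
              act (- \<rho>) d1 (v i k) = smul b1 (v i (k - 1)))"
  using ladder_grade ladder_in_domain
  by (intro exI[of _ ladder]) (simp add: ladder_domain_def act_d1_via_ladder_ops ladder_steps)

end

subsection \<open>The other operators on a given ladder\<close>

locale ladder_family = two_directions \<Gamma> smul Mg act w \<sigma> \<rho> d1
  for \<Gamma> :: "('f::field ^ 3) set" and smul :: "'f \<Rightarrow> 'm::ab_group_add \<Rightarrow> 'm"
    and Mg act w \<sigma> \<rho> d1 +
  fixes \<nu> d2 d3 :: "'f ^ 3" and a1 b1 a2 d :: 'f and v :: "int \<Rightarrow> int \<Rightarrow> 'm"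
  assumes \<nu>_mem: "\<nu> \<in> \<Gamma>"
    and \<sigma>_d2: "dpair \<sigma> d2 = 0" and \<rho>_d3: "dpair \<rho> d3 = 0"
    and \<rho>_d2_nonzero: "dpair \<rho> d2 \<noteq> 0" and \<sigma>_d3_nonzero: "dpair \<sigma> d3 \<noteq> 0"
    and a1_nonzero: "a1 \<noteq> 0" and b1_nonzero: "b1 \<noteq> 0"
    and ladder_mem: "\<forall>i k. v i k \<in> Mg (\<nu> + of_int i *s \<sigma> + of_int k *s \<rho>) \<and> v i k \<noteq> 0"
    and ladder_d1: "\<forall>i k. act \<sigma> d1 (v i k) = smul a1 (v (i + 1) k) \<and>
                          act (- \<sigma>) d1 (v i k) = smul a1 (v (i - 1) k) \<and>
                          act \<rho> d1 (v i k) = smul b1 (v i (k + 1)) \<and>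
                          act (- \<rho>) d1 (v i k) = smul b1 (v i (k - 1))"
    and d2_origin: "act \<sigma> d2 (v 0 0) = smul a2 (v 1 0)"
    and diagonal_origin: "act (\<sigma> + \<rho>) d1 (v 0 0) = smul d (v 1 1)"
begin

abbreviation grid :: "int \<Rightarrow> int \<Rightarrow> 'f ^ 3" where
  "grid i k \<equiv> \<nu> + of_int i *s \<sigma> + of_int k *s \<rho>"

abbreviation p :: 'f where "p \<equiv> dpair \<rho> d2"
abbreviation q :: 'f where "q \<equiv> dpair \<sigma> d3"

abbreviation d2_coeff :: "int \<Rightarrow> 'f" where
  "d2_coeff k \<equiv> a2 + of_int k * dpair \<rho> d2 * d / b1"

lemma ladder_nonzero: "v i k \<noteq> 0"
  using ladder_mem by blast

lemma ladder_steps_d1: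
  "act \<sigma> d1 (v i k) = smul a1 (v (i + 1) k)" "act (- \<sigma>) d1 (v i k) = smul a1 (v (i - 1) k)"
  "act \<rho> d1 (v i k) = smul b1 (v i (k + 1))" "act (- \<rho>) d1 (v i k) = smul b1 (v i (k - 1))"
  using ladder_d1 by blast+

lemma obtain_ladder_coeff:
  assumes "\<alpha> \<in> \<Gamma>" "\<alpha> \<noteq> 0" "dpair \<alpha> x = 0" "\<alpha> + grid i k = grid i' k'"
  obtains c where "act \<alpha> x (v i k) = smul c (v i' k')"
proof -
  have "act \<alpha> x (v i k) \<in> Mg (grid i' k')"
    using act_grade[OF assms(1-3) lattice_point_mem[OF \<nu>_mem]] ladder_mem assms(4) by metis
  then show thesis
    using Mg_one_dim[OF lattice_point_mem[OF \<nu>_mem]] ladder_mem that by blast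
qed

lemma grid_shifts:
  "\<sigma> + grid i k = grid (i + 1) k" "- \<sigma> + grid i k = grid (i - 1) k"
  "(\<rho> - \<sigma>) + grid i k = grid (i - 1) (k + 1)"
  by (simp_all add: vec_eq_iff algebra_simps)

lemma d2_d3_kernel: "dpair \<sigma> d2 = 0" "dpair (- \<sigma>) d2 = 0" "dpair \<rho> d3 = 0"
  using \<sigma>_d2 \<rho>_d3 by (simp_all add: dpair_simps)

lemma transport_along_\<sigma>:
  assumes comm: "\<And>m. T (act \<sigma> d1 m) = act \<sigma> d1 (T m)" "\<And>m. T (act (- \<sigma>) d1 m) = act (- \<sigma>) d1 (T m)"
    and T: "\<And>c m. T (smul c m) = smul c (T m)"
    and "T (v i k) = smul c (v i' k')"
  shows "T (v (i + 1) k) = smul c (v (i' + 1) k')" "T (v (i - 1) k) = smul c (v (i' - 1) k')"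
proof -
  show "T (v (i + 1) k) = smul c (v (i' + 1) k')"
    by (rule commuting_shift[where U = "act \<sigma> d1" and x = "v i k" and y = "v i' k'" and a = a1],
        rule comm(1), rule assms(4), rule ladder_steps_d1(1), rule ladder_steps_d1(1),
        rule a1_nonzero, rule T, simp add: act_scale direction_facts)
  show "T (v (i - 1) k) = smul c (v (i' - 1) k')"
    by (rule commuting_shift[where U = "act (- \<sigma>) d1" and x = "v i k" and y = "v i' k'" and a = a1],
        rule comm(2), rule assms(4), rule ladder_steps_d1(2), rule ladder_steps_d1(2),
        rule a1_nonzero, rule T, simp add: act_scale direction_facts)
qed

lemma transport_along_\<rho>:
  assumes comm: "\<And>m. T (act \<rho> d1 m) = act \<rho> d1 (T m)" "\<And>m. T (act (- \<rho>) d1 m) = act (- \<rho>) d1 (T m)"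
    and T: "\<And>c m. T (smul c m) = smul c (T m)"
    and "T (v i k) = smul c (v i' k')"
  shows "T (v i (k + 1)) = smul c (v i' (k' + 1))" "T (v i (k - 1)) = smul c (v i' (k' - 1))"
proof -
  show "T (v i (k + 1)) = smul c (v i' (k' + 1))"
    by (rule commuting_shift[where U = "act \<rho> d1" and x = "v i k" and y = "v i' k'" and a = b1],
        rule comm(1), rule assms(4), rule ladder_steps_d1(3), rule ladder_steps_d1(3),
        rule b1_nonzero, rule T, simp add: act_scale direction_facts)
  show "T (v i (k - 1)) = smul c (v i' (k' - 1))"
    by (rule commuting_shift[where U = "act (- \<rho>) d1" and x = "v i k" and y = "v i' k'" and a = b1],
        rule comm(2), rule assms(4), rule ladder_steps_d1(4), rule ladder_steps_d1(4),
        rule b1_nonzero, rule T, simp add: act_scale direction_facts)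
qed

lemma diagonal_action: "act (\<sigma> + \<rho>) d1 (v i k) = smul d (v (i + 1) (k + 1))"
proof -
  have comm: "act (\<sigma> + \<rho>) d1 (act \<beta> d1 m) = act \<beta> d1 (act (\<sigma> + \<rho>) d1 m)"
    if "\<beta> \<in> \<Gamma>" "\<beta> \<noteq> 0" "dpair \<beta> d1 = 0" for \<beta> m
    using act_commute_common_kernel that direction_facts by blast
  note transport = transport_along_\<sigma>[where T = "act (\<sigma> + \<rho>) d1", OF comm comm]
    transport_along_\<rho>[where T = "act (\<sigma> + \<rho>) d1", OF comm comm]
  have lin: "act (\<sigma> + \<rho>) d1 (smul c m) = smul c (act (\<sigma> + \<rho>) d1 m)" for c m
    using act_scale direction_facts by blast
  show ?thesis
  proof (induct i k rule: int_pair_induct)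
    case origin
    show ?case using diagonal_origin by simp
  next
    case (incr_fst i k)
    then show ?case using transport(1)[OF _ _ _ _ _ _ lin] direction_facts by simp
  next
    case (decr_fst i k)
    then show ?case using transport(2)[OF _ _ _ _ _ _ lin] direction_facts by simp
  next
    case (incr_snd i k)
    then show ?case using transport(3)[OF _ _ _ _ _ _ lin] direction_facts by simp
  next
    case (decr_snd i k)
    then show ?case using transport(4)[OF _ _ _ _ _ _ lin] direction_facts by simp
  qed
qed

lemma \<sigma>d2_commutes_\<sigma>d1:
  "act \<sigma> d2 (act \<sigma> d1 m) = act \<sigma> d1 (act \<sigma> d2 m)"
  "act \<sigma> d2 (act (- \<sigma>) d1 m) = act (- \<sigma>) d1 (act \<sigma> d2 m)"
  using act_bracket[of \<sigma> \<sigma> d2 d1 m] act_bracket[of \<sigma> "- \<sigma>" d2 d1 m] direction_facts d2_d3_kernel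
  by (simp_all add: act_zero_dir)

lemma \<sigma>d2_bracket_\<rho>d1:
  "act \<sigma> d2 (act \<rho> d1 m) = act \<rho> d1 (act \<sigma> d2 m) + smul p (act (\<sigma> + \<rho>) d1 m)"
  using act_bracket[of \<sigma> \<rho> d2 d1 m] direction_facts d2_d3_kernel by (simp add: act_scale_dir)

lemma \<sigma>d2_action_step_\<rho>:
  assumes "act \<sigma> d2 (v i k) = smul c (v (i + 1) k)"
  shows "act \<sigma> d2 (v i (k + 1)) = smul (c + p * d / b1) (v (i + 1) (k + 1))"
proof -
  have "smul b1 (act \<sigma> d2 (v i (k + 1))) = act \<sigma> d2 (act \<rho> d1 (v i k))"
    using direction_facts d2_d3_kernel by (simp add: ladder_steps_d1 act_scale)
  also have "\<dots> = smul (c * b1 + p * d) (v (i + 1) (k + 1))"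
    unfolding \<sigma>d2_bracket_\<rho>d1
    by (simp add: assms diagonal_action act_scale direction_facts d2_d3_kernel
        ladder_steps_d1 M.scale_left_distrib mult.commute)
  also have "\<dots> = smul b1 (smul (c + p * d / b1) (v (i + 1) (k + 1)))"
  proof -
    have "c * b1 + p * d = b1 * (c + p * d / b1)" using b1_nonzero by (simp add: field_simps)
    then show ?thesis by (simp only: M.scale_scale)
  qed
  finally show ?thesis by (rule M.scale_left_imp_eq[OF b1_nonzero])
qed

lemma \<sigma>d2_action: "act \<sigma> d2 (v i k) = smul (d2_coeff k) (v (i + 1) k)"
proof (induct i k rule: int_pair_induct)
  case origin
  then show ?case using d2_origin by simp
next
  case (incr_fst i k)
  then show ?case
    using transport_along_\<sigma>(1)[where T = "act \<sigma> d2", OF \<sigma>d2_commutes_\<sigma>d1] act_scale direction_facts d2_d3_kernel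
    by simp
next
  case (decr_fst i k)
  then show ?case
    using transport_along_\<sigma>(2)[where T = "act \<sigma> d2", OF \<sigma>d2_commutes_\<sigma>d1] act_scale direction_facts d2_d3_kernel
    by simp
next
  case (incr_snd i k)
  have "d2_coeff k + p * d / b1 = d2_coeff (k + 1)" using b1_nonzero by (simp add: field_simps)
  then show ?case using \<sigma>d2_action_step_\<rho>[OF incr_snd] by simp
next
  case (decr_snd i k)
  obtain c where c: "act \<sigma> d2 (v i (k - 1)) = smul c (v (i + 1) (k - 1))"
    using obtain_ladder_coeff[OF \<sigma>_mem direction_nonzero(1) \<sigma>_d2 grid_shifts(1)] .
  have "smul (d2_coeff k) (v (i + 1) k) = smul (c + p * d / b1) (v (i + 1) k)"
    using \<sigma>d2_action_step_\<rho>[OF c] decr_snd by simp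
  then have "c = d2_coeff (k - 1)" using ladder_nonzero b1_nonzero by (simp add: field_simps)
  then show ?case using c by simp
qed

abbreviation d23 :: "'f ^ 3" where "d23 \<equiv> dpair \<rho> d2 *s d3 - dpair \<sigma> d3 *s d2"

lemma d23_kernel: "dpair (\<sigma> + \<rho>) d23 = 0"
  using \<sigma>_d2 \<rho>_d3 by (simp add: dpair_simps algebra_simps)

lemma \<sigma>d2_bracket_\<rho>_minus_\<sigma>_d1:
  "act \<sigma> d2 (act (\<rho> - \<sigma>) d1 m) = act (\<rho> - \<sigma>) d1 (act \<sigma> d2 m) + smul p (act \<rho> d1 m)"
proof -
  have "act \<sigma> d2 (act (\<rho> - \<sigma>) d1 m) = act (\<rho> - \<sigma>) d1 (act \<sigma> d2 m) + act \<rho> (p *s d1) m"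
    using act_bracket[of \<sigma> "\<rho> - \<sigma>" d2 d1 m] direction_facts d2_d3_kernel by (simp add: dpair_simps)
  then show ?thesis using direction_facts by (simp add: act_scale_dir)
qed

lemma \<rho>d3_bracket_minus_\<sigma>d1:
  "act \<rho> d3 (act (- \<sigma>) d1 m) = act (- \<sigma>) d1 (act \<rho> d3 m) - smul q (act (\<rho> - \<sigma>) d1 m)"
proof -
  have "act \<rho> d3 (act (- \<sigma>) d1 m) = act (- \<sigma>) d1 (act \<rho> d3 m) + act (\<rho> - \<sigma>) ((- q) *s d1) m"
    using act_bracket[of \<rho> "- \<sigma>" d3 d1 m] direction_facts d2_d3_kernel by (simp add: dpair_simps)
  then show ?thesis using direction_facts act_scale_dir[of "\<rho> - \<sigma>" d1 "- q" m] by simp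
qed

lemma minus_\<sigma>d2_bracket_diagonal_d1:
  "act (- \<sigma>) d2 (act (\<sigma> + \<rho>) d1 m) = act (\<sigma> + \<rho>) d1 (act (- \<sigma>) d2 m) + smul p (act \<rho> d1 m)"
proof -
  have "act (- \<sigma>) d2 (act (\<sigma> + \<rho>) d1 m) = act (\<sigma> + \<rho>) d1 (act (- \<sigma>) d2 m) + act \<rho> (p *s d1) m"
    using act_bracket[of "- \<sigma>" "\<sigma> + \<rho>" d2 d1 m] direction_facts d2_d3_kernel by (simp add: dpair_simps)
  then show ?thesis using direction_facts by (simp add: act_scale_dir)
qed

lemma \<sigma>d2_bracket_\<rho>d3:
  "act \<sigma> d2 (act \<rho> d3 m) = act \<rho> d3 (act \<sigma> d2 m) + act (\<sigma> + \<rho>) d23 m"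
  using act_bracket[of \<sigma> \<rho> d2 d3 m] direction_facts d2_d3_kernel by simp

lemma minus_\<sigma>d2_bracket_diagonal_d23:
  "act (- \<sigma>) d2 (act (\<sigma> + \<rho>) d23 m) = act (\<sigma> + \<rho>) d23 (act (- \<sigma>) d2 m) + smul (p * p) (act \<rho> d3 m)"
proof -
  have "dpair (\<sigma> + \<rho>) d2 *s d23 - dpair (- \<sigma>) d23 *s d2 = (p * p) *s d3"
    using \<sigma>_d2 by (simp add: dpair_simps vec_eq_iff algebra_simps)
  then show ?thesis
    using act_bracket[of "- \<sigma>" "\<sigma> + \<rho>" d2 d23 m] direction_facts d2_d3_kernel d23_kernel
    by (simp add: act_scale_dir)
qed

end

lemma product_identity_cancel:
  fixes g A E P X \<beta> p :: "'a::field"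
  assumes "E \<noteq> 0" "P * X = p * p"
    and "(g * P - A * E) * (\<beta> + X) = \<beta> * ((g - E) * P - A * E) + p * p * g"
  shows "\<beta> * P = A * X"
proof -
  have "E * (\<beta> * P - A * X) = 0" using assms(2,3) by algebra
  then show ?thesis using assms(1) by simp
qed

locale ladder_family_with_d3 = ladder_family \<Gamma> smul Mg act w \<sigma> \<rho> d1 \<nu> d2 d3 a1 b1 a2 d v
  for \<Gamma> :: "('f::field ^ 3) set" and smul :: "'f \<Rightarrow> 'm::ab_group_add \<Rightarrow> 'm"
    and Mg act w \<sigma> \<rho> d1 \<nu> d2 d3 a1 b1 a2 d v +
  fixes a3 :: 'f
  assumes \<rho>d3_action: "act \<rho> d3 (v i k) = smul (a3 + of_int i * dpair \<sigma> d3 * d / a1) (v i (k + 1))"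
begin

abbreviation d3_coeff :: "int \<Rightarrow> 'f" where
  "d3_coeff i \<equiv> a3 + of_int i * dpair \<sigma> d3 * d / a1"

lemma diagonal_coeff_square: "d * d = b1 * b1"
proof -
  have comm: "act (\<rho> - \<sigma>) d1 (act \<beta> d1 m) = act \<beta> d1 (act (\<rho> - \<sigma>) d1 m)"
    if "\<beta> \<in> \<Gamma>" "\<beta> \<noteq> 0" "dpair \<beta> d1 = 0" for \<beta> m
    using act_commute_common_kernel that direction_facts by blast
  have lin: "act (\<rho> - \<sigma>) d1 (smul c m) = smul c (act (\<rho> - \<sigma>) d1 m)" for c m
    using act_scale direction_facts by blast
  obtain e where e: "act (\<rho> - \<sigma>) d1 (v 0 0) = smul e (v (0 - 1) (0 + 1))"
    using obtain_ladder_coeff[OF direction_mem(6) direction_nonzero(6) direction_d1(6) grid_shifts(3)] .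
  have e': "act (\<rho> - \<sigma>) d1 (v 1 0) = smul e (v 0 1)"
    using transport_along_\<sigma>(1)[where T = "act (\<rho> - \<sigma>) d1", OF comm comm lin e] direction_facts
    by simp
  have "smul (e * d2_coeff 1) (v 0 1) = act \<sigma> d2 (act (\<rho> - \<sigma>) d1 (v 0 0))"
    using \<sigma>d2_action[of "- 1" 1] by (simp add: e act_scale direction_facts d2_d3_kernel)
  also have "\<dots> = smul (d2_coeff 0 * e + p * b1) (v 0 1)"
    unfolding \<sigma>d2_bracket_\<rho>_minus_\<sigma>_d1 using \<sigma>d2_action[of 0 0] direction_facts
    by (simp add: e' act_scale ladder_steps_d1 M.scale_left_distrib)
  finally have "e * d2_coeff 1 = d2_coeff 0 * e + p * b1" using ladder_nonzero by simp
  then have ed: "e * d = b1 * b1" using \<rho>_d2_nonzero b1_nonzero by (simp add: field_simps)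
  have "smul (a1 * d3_coeff (- 1)) (v (- 1) 1) = act \<rho> d3 (act (- \<sigma>) d1 (v 0 0))"
    using \<rho>d3_action[of "- 1" 0] by (simp add: ladder_steps_d1 act_scale direction_facts d2_d3_kernel)
  also have "\<dots> = smul (d3_coeff 0 * a1 - q * e) (v (- 1) 1)"
    unfolding \<rho>d3_bracket_minus_\<sigma>d1 using \<rho>d3_action[of 0 0]
    by (simp add: e act_scale direction_facts d2_d3_kernel ladder_steps_d1 M.scale_left_diff_distrib)
  finally have "a1 * d3_coeff (- 1) = d3_coeff 0 * a1 - q * e" using ladder_nonzero by simp
  then have "d = e" using a1_nonzero \<sigma>_d3_nonzero by (simp add: field_simps)
  then show ?thesis using ed by simp
qed

lemma d23_action:
  "act (\<sigma> + \<rho>) d23 (v i k) =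
     smul (d3_coeff i * d2_coeff (k + 1) - d2_coeff k * d3_coeff (i + 1)) (v (i + 1) (k + 1))"
proof -
  have "act (\<sigma> + \<rho>) d23 (v i k) = act \<sigma> d2 (act \<rho> d3 (v i k)) - act \<rho> d3 (act \<sigma> d2 (v i k))"
    by (simp add: \<sigma>d2_bracket_\<rho>d3)
  also have "\<dots> = smul (d3_coeff i * d2_coeff (k + 1) - d2_coeff k * d3_coeff (i + 1)) (v (i + 1) (k + 1))"
    using direction_facts d2_d3_kernel
    by (simp add: \<rho>d3_action \<sigma>d2_action act_scale M.scale_left_diff_distrib mult.commute)
  finally show ?thesis .
qed

lemma minus_\<sigma>d2_action: "act (- \<sigma>) d2 (v i k) = smul (d2_coeff k) (v (i - 1) k)"
proof -
  define h where "h i k = d3_coeff i * d2_coeff (k + 1) - d2_coeff k * d3_coeff (i + 1)" for i k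
  have d_nonzero: "d \<noteq> 0" using diagonal_coeff_square b1_nonzero by auto
  obtain \<beta> where \<beta>: "act (- \<sigma>) d2 (v i k) = smul \<beta> (v (i - 1) k)"
    using obtain_ladder_coeff[OF direction_mem(3) direction_nonzero(3) d2_d3_kernel(2) grid_shifts(2)] .
  obtain \<beta>' where \<beta>': "act (- \<sigma>) d2 (v (i + 1) (k + 1)) = smul \<beta>' (v (i + 1 - 1) (k + 1))"
    using obtain_ladder_coeff[OF direction_mem(3) direction_nonzero(3) d2_d3_kernel(2) grid_shifts(2)] .
  \<comment> \<open>the bracket with x^(\<sigma>+\<rho>) \<partial>1 only relates neighbouring coefficients; the one with
      x^(\<sigma>+\<rho>) d23 pins them down\<close>
  have "smul (d * \<beta>') (v i (k + 1)) = act (- \<sigma>) d2 (act (\<sigma> + \<rho>) d1 (v i k))"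
    using \<beta>' direction_facts d2_d3_kernel by (simp add: diagonal_action act_scale)
  also have "\<dots> = smul (\<beta> * d + p * b1) (v i (k + 1))"
    unfolding minus_\<sigma>d2_bracket_diagonal_d1 using direction_facts
    by (simp add: \<beta> diagonal_action ladder_steps_d1 act_scale M.scale_left_distrib)
  finally have "d * \<beta>' = \<beta> * d + p * b1" using ladder_nonzero by simp
  then have \<beta>'_eq: "\<beta>' = \<beta> + p * b1 / d" using d_nonzero by (simp add: field_simps)
  have "smul (h i k * \<beta>') (v i (k + 1)) = act (- \<sigma>) d2 (act (\<sigma> + \<rho>) d23 (v i k))"
    using \<beta>' direction_facts d2_d3_kernel by (simp add: d23_action h_def act_scale)
  also have "\<dots> = smul (\<beta> * h (i - 1) k + p * p * d3_coeff i) (v i (k + 1))"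
    unfolding minus_\<sigma>d2_bracket_diagonal_d23 using direction_facts d23_kernel
    by (simp add: \<beta> d23_action h_def \<rho>d3_action act_scale M.scale_left_distrib
        M.scale_right_distrib distrib_left)
  finally have "h i k * \<beta>' = \<beta> * h (i - 1) k + p * p * d3_coeff i" using ladder_nonzero by simp
  moreover define A P X E
    where "A = d2_coeff k" and "P = p * d / b1" and "X = p * b1 / d" and "E = q * d / a1"
  moreover have "h i k = d3_coeff i * P - A * E" "h (i - 1) k = (d3_coeff i - E) * P - A * E"
    using a1_nonzero b1_nonzero by (simp_all add: h_def A_def P_def E_def field_simps)
  ultimately have "(d3_coeff i * P - A * E) * (\<beta> + X) =
      \<beta> * ((d3_coeff i - E) * P - A * E) + p * p * d3_coeff i"
    using \<beta>'_eq by (simp only: X_def)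
  moreover have "E \<noteq> 0" using a1_nonzero d_nonzero \<sigma>_d3_nonzero by (simp add: E_def)
  moreover have "P * X = p * p" using b1_nonzero d_nonzero by (simp add: P_def X_def)
  ultimately have "\<beta> * P = A * X" by (rule product_identity_cancel[rotated 2])
  then have "\<beta> * (d * d) = A * (b1 * b1)"
    using \<rho>_d2_nonzero b1_nonzero d_nonzero by (simp add: P_def X_def field_simps)
  then have "\<beta> = A" using diagonal_coeff_square b1_nonzero by simp
  then show ?thesis using \<beta> A_def by simp
qed

end

lemma (in two_directions) ladder_family_actions:
  assumes \<nu>: "\<nu> \<in> \<Gamma>" and d2: "dpair \<sigma> d2 = 0" "dpair \<rho> d2 \<noteq> 0"
    and d3: "dpair \<rho> d3 = 0" "dpair \<sigma> d3 \<noteq> 0" and ab: "a1 \<noteq> 0" "b1 \<noteq> 0"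
    and mem: "\<forall>i k. v i k \<in> Mg (\<nu> + of_int i *s \<sigma> + of_int k *s \<rho>) \<and> v i k \<noteq> 0"
    and steps: "\<forall>i k. act \<sigma> d1 (v i k) = smul a1 (v (i + 1) k) \<and>
                       act (- \<sigma>) d1 (v i k) = smul a1 (v (i - 1) k) \<and>
                       act \<rho> d1 (v i k) = smul b1 (v i (k + 1)) \<and>
                       act (- \<rho>) d1 (v i k) = smul b1 (v i (k - 1))"
    and origin: "act \<sigma> d2 (v 0 0) = smul a2 (v 1 0)" "act \<rho> d3 (v 0 0) = smul a3 (v 0 1)"
      "act (\<sigma> + \<rho>) d1 (v 0 0) = smul d (v 1 1)"
  shows "(\<forall>i k.
           act (\<sigma> + \<rho>) d1 (v i k) = smul d (v (i + 1) (k + 1)) \<and>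
           act \<sigma> d2 (v i k) = smul (a2 + of_int k * dpair \<rho> d2 * d / b1) (v (i + 1) k) \<and>
           act (- \<sigma>) d2 (v i k) = smul (a2 + of_int k * dpair \<rho> d2 * d / b1) (v (i - 1) k) \<and>
           act \<rho> d3 (v i k) = smul (a3 + of_int i * dpair \<sigma> d3 * d / a1) (v i (k + 1)) \<and>
           act (- \<rho>) d3 (v i k) = smul (a3 + of_int i * dpair \<sigma> d3 * d / a1) (v i (k - 1))) \<and>
         a1 ^ 2 = b1 ^ 2 \<and> b1 ^ 2 = d ^ 2"
proof -
  interpret \<sigma>_side: ladder_family \<Gamma> smul Mg act w \<sigma> \<rho> d1 \<nu> d2 d3 a1 b1 a2 d v
    by unfold_locales (use assms in auto)
  \<comment> \<open>the claims about \<rho> and \<partial>3 are those about \<sigma> and \<partial>2 for the transposed family\<close>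
  interpret \<rho>_side: ladder_family \<Gamma> smul Mg act w \<rho> \<sigma> d1 \<nu> d3 d2 b1 a1 a3 d "\<lambda>i k. v k i"
  proof (rule ladder_family.intro[OF two_directions_swap], unfold_locales)
    show "\<forall>i k. v k i \<in> Mg (\<nu> + of_int i *s \<rho> + of_int k *s \<sigma>) \<and> v k i \<noteq> 0"
      using mem by (metis add.assoc add.commute)
    show "act (\<rho> + \<sigma>) d1 (v 0 0) = smul d (v 1 1)" using origin(3) by (simp add: add.commute)
  qed (use assms in auto)
  interpret \<sigma>_full: ladder_family_with_d3 \<Gamma> smul Mg act w \<sigma> \<rho> d1 \<nu> d2 d3 a1 b1 a2 d v a3
    by unfold_locales (use \<rho>_side.\<sigma>d2_action in simp)
  interpret \<rho>_full: ladder_family_with_d3 \<Gamma> smul Mg act w \<rho> \<sigma> d1 \<nu> d3 d2 b1 a1 a3 d "\<lambda>i k. v k i" a2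
    by unfold_locales (use \<sigma>_side.\<sigma>d2_action in simp)
  show ?thesis
    using \<sigma>_side.diagonal_action \<sigma>_side.\<sigma>d2_action \<sigma>_full.minus_\<sigma>d2_action \<rho>_side.\<sigma>d2_action \<rho>_full.minus_\<sigma>d2_action
      \<sigma>_full.diagonal_coeff_square \<rho>_full.diagonal_coeff_square
    by (simp add: power2_eq_square)
qed

theorem lemma3p2:
  fixes \<Gamma> :: "('f::{alg_closed_field, field_char_0} ^ 3) set"
    and smul :: "'f \<Rightarrow> 'm::ab_group_add \<Rightarrow> 'm"
    and Mg :: "'f ^ 3 \<Rightarrow> 'm set"
    and act :: "'f ^ 3 \<Rightarrow> 'f ^ 3 \<Rightarrow> 'm \<Rightarrow> 'm"
    and w :: "'f ^ 3 \<Rightarrow> 'm"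
    and \<sigma> \<rho> \<nu> d1 d2 d3 :: "'f ^ 3"
    and a1 b1 :: 'f
  assumes lattice: "is_Z3_lattice \<Gamma>"
    and ker_trivial: "\<forall>d. (\<forall>\<alpha>\<in>\<Gamma>. dpair \<alpha> d = 0) \<longrightarrow> d = 0"
    and module: "graded_S_module \<Gamma> smul Mg act"
    and dim1: "\<forall>\<theta>\<in>\<Gamma>. vector_space.dim smul (Mg \<theta>) = 1"
    and basis: "\<forall>\<theta>\<in>\<Gamma>. w \<theta> \<noteq> 0 \<and> Mg \<theta> = {smul c (w \<theta>) | c. True}"
    and \<sigma>\<Gamma>: "\<sigma> \<in> \<Gamma>" and \<rho>\<Gamma>: "\<rho> \<in> \<Gamma>"
    and indep: "\<forall>i k :: int. of_int i *s \<sigma> + of_int k *s \<rho> = 0 \<longrightarrow> i = 0 \<and> k = 0"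
    and d1: "d1 \<noteq> 0" "dpair \<sigma> d1 = 0" "dpair \<rho> d1 = 0"
    and d2: "dpair \<sigma> d2 = 0" "d2 \<notin> {c *s d1 | c. True}"
    and d3: "dpair \<rho> d3 = 0" "d3 \<notin> {c *s d1 | c. True}"
    and \<nu>\<Gamma>: "\<nu> \<in> \<Gamma>"
    and nz\<sigma>: "act (- \<sigma>) d1 (act \<sigma> d1 (w \<nu>)) \<noteq> 0"
    and nz\<rho>: "act (- \<rho>) d1 (act \<rho> d1 (w \<nu>)) \<noteq> 0"
    and a1: "a1 \<noteq> 0" "act (- \<sigma>) d1 (act \<sigma> d1 (w \<nu>)) = smul (a1 ^ 2) (w \<nu>)"
    and b1: "b1 \<noteq> 0" "act (- \<rho>) d1 (act \<rho> d1 (w \<nu>)) = smul (b1 ^ 2) (w \<nu>)"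
  shows
    "(\<exists>v :: int \<Rightarrow> int \<Rightarrow> 'm.
        (\<forall>i k. v i k \<in> Mg (\<nu> + of_int i *s \<sigma> + of_int k *s \<rho>) \<and> v i k \<noteq> 0) \<and>
        (\<forall>i k. act \<sigma> d1 (v i k) = smul a1 (v (i + 1) k) \<and>
               act (- \<sigma>) d1 (v i k) = smul a1 (v (i - 1) k) \<and>
               act \<rho> d1 (v i k) = smul b1 (v i (k + 1)) \<and>
               act (- \<rho>) d1 (v i k) = smul b1 (v i (k - 1)))) \<and>
     (\<forall>(v :: int \<Rightarrow> int \<Rightarrow> 'm) a2 a3 d.
        (\<forall>i k. v i k \<in> Mg (\<nu> + of_int i *s \<sigma> + of_int k *s \<rho>) \<and> v i k \<noteq> 0) \<longrightarrow>
        (\<forall>i k. act \<sigma> d1 (v i k) = smul a1 (v (i + 1) k) \<and>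
               act (- \<sigma>) d1 (v i k) = smul a1 (v (i - 1) k) \<and>
               act \<rho> d1 (v i k) = smul b1 (v i (k + 1)) \<and>
               act (- \<rho>) d1 (v i k) = smul b1 (v i (k - 1))) \<longrightarrow>
        act \<sigma> d2 (v 0 0) = smul a2 (v 1 0) \<longrightarrow>
        act \<rho> d3 (v 0 0) = smul a3 (v 0 1) \<longrightarrow>
        act (\<sigma> + \<rho>) d1 (v 0 0) = smul d (v 1 1) \<longrightarrow>
        (\<forall>i k.
           act (\<sigma> + \<rho>) d1 (v i k) = smul d (v (i + 1) (k + 1)) \<and>
           act \<sigma> d2 (v i k) = smul (a2 + of_int k * dpair \<rho> d2 * d / b1) (v (i + 1) k) \<and>
           act (- \<sigma>) d2 (v i k) = smul (a2 + of_int k * dpair \<rho> d2 * d / b1) (v (i - 1) k) \<and>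
           act \<rho> d3 (v i k) = smul (a3 + of_int i * dpair \<sigma> d3 * d / a1) (v i (k + 1)) \<and>
           act (- \<rho>) d3 (v i k) = smul (a3 + of_int i * dpair \<sigma> d3 * d / a1) (v i (k - 1))) \<and>
        a1 ^ 2 = b1 ^ 2 \<and> b1 ^ 2 = d ^ 2)"
proof -
  \<comment> \<open>dim1 and nz\<sigma>, nz\<rho> follow from basis, a1 and b1\<close>
  interpret rank_one_graded_module \<Gamma> smul Mg act w
    using module basis Z3_lattice_add[OF lattice] Z3_lattice_uminus[OF lattice] by unfold_locales
  interpret two_directions \<Gamma> smul Mg act w \<sigma> \<rho> d1
    using \<sigma>\<Gamma> \<rho>\<Gamma> indep d1 by unfold_locales
  interpret ladder_seed \<Gamma> smul Mg act w \<sigma> \<rho> d1 \<nu> a1 b1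
    using \<nu>\<Gamma> a1 b1 by unfold_locales
  have kernel_line: "x \<in> {c *s d1 | c. True}" if "dpair \<sigma> x = 0" "dpair \<rho> x = 0" for x
    using Z3_lattice_common_kernel_dim_one[OF lattice ker_trivial \<sigma>\<Gamma> \<rho>\<Gamma> indep d1 that] .
  have "dpair \<rho> d2 \<noteq> 0" "dpair \<sigma> d3 \<noteq> 0" using kernel_line d2 d3 by blast+
  then show ?thesis
    using exists_ladder_family ladder_family_actions[OF \<nu>\<Gamma> d2(1) _ d3(1) _ a1(1) b1(1)] by blast
qed

end
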